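(* Let $\nu,T>0$, $W(x_1,x_2,x_3):=(\sin x_2,\sin x_3,\sin x_1)$ and $\psi(x):=e^{-\frac{|x|^2}{8\nu T}}$ on $\mathbb{R}^3$. Then $(0,0,0)$ is a hyperbolic zero of the vector field $\mathop{\mathrm{curl}}\mathop{\mathrm{curl}}(\psi W)$.
   Context: A zero $x_0$ of a $C^1$ vector field $v$ is hyperbolic if $v(x_0)=0$, $\nabla v(x_0)$ is invertible and has no eigenvalue with zero real part. *)

theory Defs
  imports "HOL-Analysis.Analysis"
begin

definition pdiff :: "(real^3 \<Rightarrow> real) \<Rightarrow> 3 \<Rightarrow> real^3 \<Rightarrow> real" where
  "pdiff g i x = vector_derivative (\<lambda>t. g (x + t *\<^sub>R axis i 1)) (at 0)"

definition curl :: "(real^3 \<Rightarrow> real^3) \<Rightarrow> real^3 \<Rightarrow> real^3" where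
  "curl F x = vector
     [pdiff (\<lambda>y. F y $ 3) 2 x - pdiff (\<lambda>y. F y $ 2) 3 x,
      pdiff (\<lambda>y. F y $ 1) 3 x - pdiff (\<lambda>y. F y $ 3) 1 x,
      pdiff (\<lambda>y. F y $ 2) 1 x - pdiff (\<lambda>y. F y $ 1) 2 x]"

definition C1_field :: "(real^'n \<Rightarrow> real^'n) \<Rightarrow> bool" where
  "C1_field v \<longleftrightarrow> (\<exists>v'. (\<forall>x. (v has_derivative blinfun_apply (v' x)) (at x)) \<and> continuous_on UNIV v')"

definition complex_eigenvalue :: "real^'n^'n \<Rightarrow> complex \<Rightarrow> bool" where
  "complex_eigenvalue A l \<longleftrightarrow>
     (\<exists>z::complex^'n. z \<noteq> 0 \<and> (\<chi> i. \<Sum>j\<in>UNIV. complex_of_real (A $ i $ j) * z $ j) = (\<chi> i. l * z $ i))"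

definition hyperbolic_zero :: "(real^'n \<Rightarrow> real^'n) \<Rightarrow> real^'n \<Rightarrow> bool" where
  "hyperbolic_zero v x0 \<longleftrightarrow>
     C1_field v \<and> v x0 = 0 \<and>
     invertible (matrix (frechet_derivative v (at x0))) \<and>
     (\<forall>l. complex_eigenvalue (matrix (frechet_derivative v (at x0))) l \<longrightarrow> Re l \<noteq> 0)"

end

theory Submission
  imports Defs
begin

text \<open>
  Every component of \<open>curl (curl (\<psi> W))\<close> is built from constants and coordinates by sums,
  products, \<open>sin\<close>, \<open>cos\<close> and \<open>exp\<close>. This class of functions is closed under partial
  differentiation, so the field is \<open>C\<^sup>1\<close> and its Jacobian at the origin can be computed
  symbolically. The result is the circulant matrix with rows \<open>(0, a, b)\<close>, \<open>(b, 0, a)\<close>,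
  \<open>(a, b, 0)\<close>, where \<open>a = 1 + 1/(\<nu> T)\<close> and \<open>b = -1/(4 \<nu> T)\<close>. Its determinant is
  \<open>a\<^sup>3 + b\<^sup>3\<close> and its characteristic polynomial is \<open>\<lambda>\<^sup>3 - 3 a b \<lambda> - (a\<^sup>3 + b\<^sup>3)\<close>, whose real
  part at a purely imaginary \<open>\<lambda>\<close> is \<open>-(a\<^sup>3 + b\<^sup>3)\<close>. Since \<open>a > -b \<ge> 0\<close>, this is nonzero.
\<close>

inductive elementary :: "(real^'n \<Rightarrow> real) \<Rightarrow> bool" where
  elementary_const: "elementary (\<lambda>x. c)"
| elementary_coord: "elementary (\<lambda>x. x $ i)"
| elementary_add: "elementary f \<Longrightarrow> elementary g \<Longrightarrow> elementary (\<lambda>x. f x + g x)"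
| elementary_mult: "elementary f \<Longrightarrow> elementary g \<Longrightarrow> elementary (\<lambda>x. f x * g x)"
| elementary_sin: "elementary f \<Longrightarrow> elementary (\<lambda>x. sin (f x))"
| elementary_cos: "elementary f \<Longrightarrow> elementary (\<lambda>x. cos (f x))"
| elementary_exp: "elementary f \<Longrightarrow> elementary (\<lambda>x. exp (f x))"

lemma elementary_uminus: "elementary f \<Longrightarrow> elementary (\<lambda>x. - f x)"
  using elementary_mult[OF elementary_const[of "-1"], of f] by simp

lemma elementary_diff: "elementary f \<Longrightarrow> elementary g \<Longrightarrow> elementary (\<lambda>x. f x - g x)"
  using elementary_add[OF _ elementary_uminus, of f g] by simp

lemma elementary_divide: "elementary f \<Longrightarrow> elementary (\<lambda>x. f x / c)"
  using elementary_mult[OF _ elementary_const[of "inverse c"], of f] by (simp add: divide_inverse)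

lemma elementary_power: "elementary f \<Longrightarrow> elementary (\<lambda>x. f x ^ n)"
  by (induction n) (auto intro: elementary.intros)

lemmas elementary_intros [simp] =
  elementary.intros elementary_uminus elementary_diff elementary_divide elementary_power

lemma GDERIV_vec_nth: "GDERIV (\<lambda>x. x $ i) x :> axis i 1"
  unfolding gderiv_def inner_axis
  by (simp add: bounded_linear_imp_has_derivative bounded_linear_vec_nth)

lemma elementary_gderiv:
  "elementary f \<Longrightarrow> \<exists>df. (\<forall>j. elementary (\<lambda>x. df x $ j)) \<and> (\<forall>x. GDERIV f x :> df x)"
proof (induction rule: elementary.induct)
  case (elementary_const c)
  show ?case
    by (rule exI[of _ "\<lambda>x. 0"]) (simp add: GDERIV_const)
next
  case (elementary_coord i)
  show ?case
    by (rule exI[of _ "\<lambda>x. axis i 1"]) (simp add: GDERIV_vec_nth)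
next
  case (elementary_add f g)
  then obtain df dg where "\<forall>j. elementary (\<lambda>x. df x $ j)" "\<forall>x. GDERIV f x :> df x"
    and "\<forall>j. elementary (\<lambda>x. dg x $ j)" "\<forall>x. GDERIV g x :> dg x"
    by blast
  then show ?case
    by (intro exI[of _ "\<lambda>x. df x + dg x"]) (simp add: GDERIV_add)
next
  case (elementary_mult f g)
  then obtain df dg where "\<forall>j. elementary (\<lambda>x. df x $ j)" "\<forall>x. GDERIV f x :> df x"
    and "\<forall>j. elementary (\<lambda>x. dg x $ j)" "\<forall>x. GDERIV g x :> dg x"
    by blast
  with elementary_mult.hyps show ?case
    by (intro exI[of _ "\<lambda>x. f x *\<^sub>R dg x + g x *\<^sub>R df x"]) (simp add: GDERIV_mult)
next
  case (elementary_sin f)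
  then obtain df where "\<forall>j. elementary (\<lambda>x. df x $ j)" "\<forall>x. GDERIV f x :> df x"
    by blast
  with elementary_sin.hyps show ?case
    by (intro exI[of _ "\<lambda>x. cos (f x) *\<^sub>R df x"]) (simp add: GDERIV_DERIV_compose DERIV_sin)
next
  case (elementary_cos f)
  then obtain df where "\<forall>j. elementary (\<lambda>x. df x $ j)" "\<forall>x. GDERIV f x :> df x"
    by blast
  with elementary_cos.hyps show ?case
    by (intro exI[of _ "\<lambda>x. - sin (f x) *\<^sub>R df x"]) (simp add: GDERIV_DERIV_compose DERIV_cos del: scaleR_minus_left)
next
  case (elementary_exp f)
  then obtain df where "\<forall>j. elementary (\<lambda>x. df x $ j)" "\<forall>x. GDERIV f x :> df x"
    by blast
  with elementary_exp.hyps show ?case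
    by (intro exI[of _ "\<lambda>x. exp (f x) *\<^sub>R df x"]) (simp add: GDERIV_DERIV_compose DERIV_exp)
qed

lemma elementary_continuous:
  assumes "elementary f"
  shows "continuous_on UNIV f"
proof -
  obtain df where "\<And>x. GDERIV f x :> df x"
    using elementary_gderiv[OF assms] by blast
  then show ?thesis
    unfolding gderiv_def by (meson continuous_at_imp_continuous_on has_derivative_continuous)
qed

lemma vec_lambda_eq_sum_axis: "(\<chi> k. a k) = (\<Sum>k\<in>UNIV. a k *\<^sub>R axis k (1::real))"
  by (simp add: vec_eq_iff axis_def if_distrib cong: if_cong)

lemma has_derivative_vec_lambda:
  fixes f :: "'a::real_normed_vector \<Rightarrow> real^'n"
  assumes "\<And>k. ((\<lambda>x. f x $ k) has_derivative f' k) F"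
  shows "(f has_derivative (\<lambda>h. \<chi> k. f' k h)) F"
proof -
  have f_eq: "f = (\<lambda>x. \<Sum>k\<in>UNIV. f x $ k *\<^sub>R axis k 1)"
    by (rule ext) (simp flip: vec_lambda_eq_sum_axis)
  show ?thesis
    unfolding vec_lambda_eq_sum_axis
    by (subst f_eq) (intro has_derivative_sum has_derivative_scaleR_left assms)
qed

lemma C1_field_elementary:
  fixes v :: "real^'n \<Rightarrow> real^'n"
  assumes "\<And>k. elementary (\<lambda>x. v x $ k)"
  shows "C1_field v"
proof -
  obtain dv where dv: "\<And>k j. elementary (\<lambda>x. dv k x $ j)" and "\<And>k x. GDERIV (\<lambda>x. v x $ k) x :> dv k x"
    using elementary_gderiv[OF assms] by metis
  then have v_deriv: "(v has_derivative (\<lambda>h. \<chi> k. inner h (dv k x))) (at x)" for x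
    unfolding gderiv_def by (intro has_derivative_vec_lambda)
  define E :: "'n \<Rightarrow> 'n \<Rightarrow> (real^'n) \<Rightarrow>\<^sub>L (real^'n)"
    where "E k j = Blinfun (\<lambda>h. (h $ j) *\<^sub>R axis k 1)" for k j
  have E_apply: "blinfun_apply (E k j) h = (h $ j) *\<^sub>R axis k 1" for k j h
    unfolding E_def by (subst bounded_linear_Blinfun_apply) (auto intro: bounded_linear_intros)
  define v' where "v' x = (\<Sum>k\<in>UNIV. \<Sum>j\<in>UNIV. dv k x $ j *\<^sub>R E k j)" for x
  have "blinfun_apply (v' x) = (\<lambda>h. \<chi> k. inner h (dv k x))" for x
    by (simp add: fun_eq_iff v'_def vec_lambda_eq_sum_axis inner_vec_def blinfun.sum_left
        blinfun.scaleR_left E_apply scaleR_sum_left mult.commute)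
  moreover have "continuous_on UNIV v'"
    unfolding v'_def by (intro continuous_intros elementary_continuous dv)
  ultimately show ?thesis
    unfolding C1_field_def using v_deriv by metis
qed

lemma pdiff_eq_derivative:
  assumes "(g has_derivative g') (at x)"
  shows "pdiff g i x = g' (axis i 1)"
proof -
  have "((\<lambda>t. x + t *\<^sub>R axis i 1) has_derivative (\<lambda>t. t *\<^sub>R axis i 1)) (at (0::real))"
    by (auto intro!: derivative_eq_intros)
  then have "((\<lambda>t. g (x + t *\<^sub>R axis i 1)) has_derivative (\<lambda>t. g' (t *\<^sub>R axis i 1))) (at 0)"
    by (rule has_derivative_compose) (use assms in simp)
  moreover have "g' (t *\<^sub>R axis i 1) = t *\<^sub>R g' (axis i 1)" for t
    using assms has_derivative_linear linear_scale by blast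
  ultimately have "((\<lambda>t. g (x + t *\<^sub>R axis i 1)) has_vector_derivative g' (axis i 1)) (at 0)"
    by (simp add: has_vector_derivative_def)
  then show ?thesis
    unfolding pdiff_def by (rule vector_derivative_at)
qed

lemma pdiff_eq_gderiv: "GDERIV g x :> D \<Longrightarrow> pdiff g i x = D $ i"
  unfolding gderiv_def by (simp add: pdiff_eq_derivative inner_axis')

lemma
  assumes "elementary f"
  shows elementary_pdiff [simp]: "elementary (pdiff f i)"
    and gderiv_elementary: "GDERIV f x :> (\<chi> j. pdiff f j x)"
proof -
  obtain df where df: "\<And>j. elementary (\<lambda>x. df x $ j)" and f_gderiv: "\<And>x. GDERIV f x :> df x"
    using elementary_gderiv[OF assms] by blast
  have "pdiff f j = (\<lambda>x. df x $ j)" for j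
    using pdiff_eq_gderiv[OF f_gderiv] by (simp add: fun_eq_iff)
  then show "elementary (pdiff f i)" "GDERIV f x :> (\<chi> j. pdiff f j x)"
    using df f_gderiv by simp_all
qed

lemma pdiff_const [simp]: "pdiff (\<lambda>x. c) i x = 0"
  by (simp add: pdiff_eq_gderiv[OF GDERIV_const])

lemma pdiff_vec_nth [simp]: "pdiff (\<lambda>x. x $ j) i x = (if j = i then 1 else 0)"
  by (simp add: pdiff_eq_gderiv[OF GDERIV_vec_nth] axis_def)

lemma pdiff_add [simp]:
  "elementary f \<Longrightarrow> elementary g \<Longrightarrow> pdiff (\<lambda>x. f x + g x) i x = pdiff f i x + pdiff g i x"
  by (simp add: pdiff_eq_gderiv[OF GDERIV_add[OF gderiv_elementary gderiv_elementary]])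

lemma pdiff_diff [simp]:
  "elementary f \<Longrightarrow> elementary g \<Longrightarrow> pdiff (\<lambda>x. f x - g x) i x = pdiff f i x - pdiff g i x"
  by (simp add: pdiff_eq_gderiv[OF GDERIV_diff[OF gderiv_elementary gderiv_elementary]])

lemma pdiff_mult [simp]:
  "elementary f \<Longrightarrow> elementary g \<Longrightarrow> pdiff (\<lambda>x. f x * g x) i x = f x * pdiff g i x + g x * pdiff f i x"
  by (simp add: pdiff_eq_gderiv[OF GDERIV_mult[OF gderiv_elementary gderiv_elementary]])

lemma pdiff_uminus [simp]: "elementary f \<Longrightarrow> pdiff (\<lambda>x. - f x) i x = - pdiff f i x"
  by (simp add: pdiff_eq_gderiv[OF GDERIV_minus[OF gderiv_elementary]])

lemma pdiff_divide [simp]: "elementary f \<Longrightarrow> pdiff (\<lambda>x. f x / c) i x = pdiff f i x / c"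
  by (simp add: pdiff_eq_gderiv[OF GDERIV_DERIV_compose[OF gderiv_elementary DERIV_cdivide[OF DERIV_ident]]])

lemma pdiff_power [simp]:
  "elementary f \<Longrightarrow> pdiff (\<lambda>x. f x ^ n) i x = real n * f x ^ (n - 1) * pdiff f i x"
  by (simp add: pdiff_eq_gderiv[OF GDERIV_DERIV_compose[OF gderiv_elementary DERIV_pow]])

lemma pdiff_sin [simp]: "elementary f \<Longrightarrow> pdiff (\<lambda>x. sin (f x)) i x = cos (f x) * pdiff f i x"
  by (simp add: pdiff_eq_gderiv[OF GDERIV_DERIV_compose[OF gderiv_elementary DERIV_sin]])

lemma pdiff_cos [simp]: "elementary f \<Longrightarrow> pdiff (\<lambda>x. cos (f x)) i x = - sin (f x) * pdiff f i x"
  by (simp add: pdiff_eq_gderiv[OF GDERIV_DERIV_compose[OF gderiv_elementary DERIV_cos]])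

lemma pdiff_exp [simp]: "elementary f \<Longrightarrow> pdiff (\<lambda>x. exp (f x)) i x = exp (f x) * pdiff f i x"
  by (simp add: pdiff_eq_gderiv[OF GDERIV_DERIV_compose[OF gderiv_elementary DERIV_exp]])

lemma elementary_curl:
  assumes "\<And>k. elementary (\<lambda>x. F x $ k)"
  shows "elementary (\<lambda>x. curl F x $ k)"
proof -
  have "\<forall>k. elementary (\<lambda>x. curl F x $ k)"
    unfolding curl_def forall_3 using assms by simp
  then show ?thesis ..
qed

lemma matrix_frechet_derivative_elementary:
  fixes v :: "real^3 \<Rightarrow> real^3"
  assumes "\<And>k. elementary (\<lambda>x. v x $ k)"
  shows "matrix (frechet_derivative v (at x)) = (\<chi> i j. pdiff (\<lambda>y. v y $ i) j x)"
proof -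
  have "(v has_derivative (\<lambda>h. \<chi> k. inner h (\<chi> j. pdiff (\<lambda>y. v y $ k) j x))) (at x)"
    using gderiv_elementary[OF assms] unfolding gderiv_def by (intro has_derivative_vec_lambda)
  then show ?thesis
    by (simp add: frechet_derivative_at[symmetric] matrix_def inner_axis')
qed

definition circulant :: "real \<Rightarrow> real \<Rightarrow> real^3^3" where
  "circulant a b = vector [vector [0, a, b], vector [b, 0, a], vector [a, b, 0]]"

lemma det_circulant: "det (circulant a b) = a^3 + b^3"
  by (simp add: det_3 circulant_def power3_eq_cube algebra_simps)

lemma circulant_eigenvalue_root:
  assumes "complex_eigenvalue (circulant a b) l"
  shows "l^3 - of_real (3 * a * b) * l - of_real (a^3 + b^3) = 0"
proof -
  obtain z :: "complex^3" where "z \<noteq> 0"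
    and eigen: "(\<chi> i. \<Sum>j\<in>UNIV. of_real (circulant a b $ i $ j) * z $ j) = (\<chi> i. l * z $ i)"
    using assms unfolding complex_eigenvalue_def by blast
  let ?a = "complex_of_real a" and ?b = "complex_of_real b"
  define p where "p = l^3 - of_real (3 * a * b) * l - of_real (a^3 + b^3)"
  define r where "r i = l * z$i - (\<Sum>j\<in>UNIV. of_real (circulant a b $ i $ j) * z$j)" for i
  have r_zero: "r i = 0" for i
    using eigen by (simp add: r_def vec_eq_iff)
  \<comment> \<open>The coefficients form the adjugate of \<open>l I - circulant a b\<close>, whose determinant is \<open>p\<close>.\<close>
  have "p * z$1 = (l^2 - ?a*?b) * r 1 + (?a*l + ?b^2) * r 2 + (?a^2 + ?b*l) * r 3"
    and "p * z$2 = (l^2 - ?a*?b) * r 2 + (?a*l + ?b^2) * r 3 + (?a^2 + ?b*l) * r 1"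
    and "p * z$3 = (l^2 - ?a*?b) * r 3 + (?a*l + ?b^2) * r 1 + (?a^2 + ?b*l) * r 2"
    unfolding p_def r_def
    by (simp_all add: sum_3 circulant_def algebra_simps power2_eq_square power3_eq_cube)
  then have "p * z$k = 0" for k
    using exhaust_3[of k] by (auto simp: r_zero)
  with \<open>z \<noteq> 0\<close> have "p = 0"
    by (auto simp: vec_eq_iff)
  then show ?thesis
    unfolding p_def .
qed

lemma circulant_eigenvalue_Re_nonzero:
  assumes "a^3 + b^3 \<noteq> 0" and "complex_eigenvalue (circulant a b) l"
  shows "Re l \<noteq> 0"
proof
  assume "Re l = 0"
  then obtain y where l: "l = Complex 0 y"
    by (metis complex.exhaust_sel)
  have "Re (l^3 - of_real (3 * a * b) * l - of_real (a^3 + b^3)) = - (a^3 + b^3)"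
    unfolding l by (simp add: power3_eq_cube)
  with circulant_eigenvalue_root[OF assms(2)] assms(1) show False
    by simp
qed

lemma hyperbolic_zero_circulant_jacobian:
  fixes v :: "real^3 \<Rightarrow> real^3"
  assumes elementary: "\<And>k. elementary (\<lambda>x. v x $ k)"
    and "v x0 = 0"
    and "(\<chi> i j. pdiff (\<lambda>x. v x $ i) j x0) = circulant a b"
    and "a^3 + b^3 \<noteq> 0"
  shows "hyperbolic_zero v x0"
  unfolding hyperbolic_zero_def matrix_frechet_derivative_elementary[OF elementary]
  using assms C1_field_elementary[OF elementary] circulant_eigenvalue_Re_nonzero
  by (auto simp: invertible_det_nz det_circulant)

lemma power2_norm_vec3: "(norm (x::real^3))\<^sup>2 = (x$1)\<^sup>2 + (x$2)\<^sup>2 + (x$3)\<^sup>2"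
  unfolding power2_norm_eq_inner inner_vec_def sum_3 by (simp add: power2_eq_square)

theorem proposition4p6:
  fixes \<nu> T :: real
  assumes "\<nu> > 0" and "T > 0"
  shows "hyperbolic_zero
           (curl (curl (\<lambda>x::real^3. exp (- (norm x)\<^sup>2 / (8 * \<nu> * T)) *\<^sub>R
                                      vector [sin (x $ 2), sin (x $ 3), sin (x $ 1)])))
           0"
proof -
  define F :: "real^3 \<Rightarrow> real^3" where
    "F = (\<lambda>x. exp (- (norm x)\<^sup>2 / (8 * \<nu> * T)) *\<^sub>R vector [sin (x $ 2), sin (x $ 3), sin (x $ 1)])"
  define a where "a = 1 + 1 / (\<nu> * T)"
  define b where "b = - 1 / (4 * \<nu> * T)"
  have "\<forall>k. elementary (\<lambda>x. F x $ k)"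
    unfolding forall_3 F_def power2_norm_vec3 by simp
  then have curl_curl_elementary: "elementary (\<lambda>x. curl (curl F) x $ k)" for k
    by (blast intro: elementary_curl)
  have "curl (curl F) 0 = 0"
    unfolding curl_def F_def power2_norm_vec3 by (simp add: vec_eq_iff forall_3)
  moreover have "(\<chi> i j. pdiff (\<lambda>x. curl (curl F) x $ i) j 0) = circulant a b"
    unfolding curl_def F_def power2_norm_vec3 circulant_def a_def b_def
    by (simp add: vec_eq_iff forall_3)
  moreover have "a^3 + b^3 \<noteq> 0"
  proof -
    have "- b < a" "0 \<le> - b"
      using assms by (simp_all add: a_def b_def field_simps add_pos_pos)
    then have "(- b)^3 < a^3"
      by (intro power_strict_mono) auto
    then show ?thesis
      by simp
  qed
  ultimately show ?thesis
    unfolding F_def[symmetric] by (rule hyperbolic_zero_circulant_jacobian[OF curl_curl_elementary])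
qed

end
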